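(* Let $\Gamma\subseteq\mathbb R^n$ be an open convex set, $S\subseteq\Gamma$ a nonempty convex set, and $f:\Gamma\to\mathbb R$ a continuously differentiable function that is quasiconvex on $\Gamma$. Let $\bar S=\arg\min\{f(x)\mid x\in S\}$, and suppose $\bar x\in\bar S$ with $\nabla f(\bar x)\neq 0$. Define \[ \begin{aligned} S_1&:=\{x\in S\mid \nabla f(x)^T(\bar x-x)=0,\ \nabla f(x)\ne0\},\\ S_2&:=\{x\in S\mid \nabla f(x)^T(\bar x-x)\ge 0,\ \nabla f(x)\ne0\},\\ S_3&:=\{x\in S\mid \nabla f(x)^T(\bar x-x)=\nabla f(\bar x)^T(x-\bar x),\ \nabla f(x)\ne0\},\\ S_4&:=\{x\in S\mid \nabla f(x)^T(\bar x-x)\ge\nabla f(\bar x)^T(x-\bar x),\ \nabla f(x)\ne0\},\\ S_5&:=\{x\in S\mid \nabla f(x)^T(\bar x-x)=\nabla f(\bar x)^T(x-\bar x)=0,\ \nabla f(x)\ne0\}. \end{aligned} \] Then $\bar S=S_1=S_2=S_3=S_4=S_5$.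
   Context: A function $f:\Gamma\to\mathbb R$ on a convex set $\Gamma\subseteq\mathbb R^n$ is quasiconvex on $\Gamma$ iff $f(x+t(y-x))\le\max\{f(x),f(y)\}$ for all $x,y\in\Gamma$ and $t\in[0,1]$. *)

theory Defs
  imports "HOL-Analysis.Analysis"
begin

definition quasiconvex_on :: "('a::real_vector) set \<Rightarrow> ('a \<Rightarrow> real) \<Rightarrow> bool" where
  "quasiconvex_on \<Gamma> f \<longleftrightarrow>
     (\<forall>x\<in>\<Gamma>. \<forall>y\<in>\<Gamma>. \<forall>t\<in>{0..1::real}. f (x + t *\<^sub>R (y - x)) \<le> max (f x) (f y))"

definition argmin_on :: "'a set \<Rightarrow> ('a \<Rightarrow> real) \<Rightarrow> 'a set" where
  "argmin_on S f = {x \<in> S. \<forall>y\<in>S. f x \<le> f y}"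

end

theory Submission
  imports Defs
begin

text \<open>A minimiser \<open>x\<close> of \<open>f\<close> on \<open>S\<close> satisfies \<open>\<nabla>f(x)\<^sup>T(z - x) \<ge> 0\<close> for \<open>z \<in> S\<close>, while quasiconvexity gives
  \<open>\<nabla>f(x)\<^sup>T(z - x) \<le> 0\<close> whenever \<open>f z \<le> f x\<close>. Applied to two minimisers \<open>x\<close>, \<open>x\<^sub>0\<close> this makes both
  inner products vanish. Conversely a quasiconvex \<open>C\<^sup>1\<close> function is pseudoconvex at points of
  nonzero gradient: if \<open>\<nabla>f(x)\<^sup>T(y - x) \<ge> 0\<close> but \<open>f y < f x\<close>, then moving \<open>y\<close> slightly along \<open>\<nabla>f(x)\<close>
  keeps the value below \<open>f x\<close> and makes the inner product positive. The remaining point is that the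
  gradient cannot vanish at a minimiser \<open>x\<close> when \<open>\<nabla>f(x\<^sub>0) \<noteq> 0\<close>: the segment \<open>[x\<^sub>0, x]\<close> lies in a level
  set of \<open>f\<close>, and on a level set the directional derivative of a quasiconvex function at a convex
  combination of two points is bounded by the larger of the two endpoint derivatives; choosing the
  directions suitably near \<open>x\<^sub>0\<close>, where \<open>\<nabla>f\<close> is close to \<open>\<nabla>f(x\<^sub>0)\<close> by continuity, contradicts this.\<close>

lemma has_derivative_directional_quotient:
  fixes f :: "'a::real_inner \<Rightarrow> real"
  assumes "(f has_derivative (\<lambda>h. g \<bullet> h)) (at x)"
  shows "((\<lambda>s. (f (x + s *\<^sub>R v) - f x) / s) \<longlongrightarrow> g \<bullet> v) (at_right 0)"
proof -
  have "((\<lambda>s. x + s *\<^sub>R v) has_derivative (\<lambda>s. s *\<^sub>R v)) (at 0)"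
    by (auto intro!: derivative_eq_intros)
  from has_derivative_compose[OF this, of f "\<lambda>h. g \<bullet> h"] assms
  have "((\<lambda>s. f (x + s *\<^sub>R v)) has_field_derivative g \<bullet> v) (at 0)"
    by (intro has_derivative_imp_has_field_derivative) auto
  hence "((\<lambda>s. (f (x + s *\<^sub>R v) - f x) / s) \<longlongrightarrow> g \<bullet> v) (at 0)"
    unfolding has_field_derivative_iff by simp
  thus ?thesis by (rule filterlim_mono) (simp_all add: at_le)
qed

lemma eventually_in_unit_interval_at_right: "\<forall>\<^sub>F s in at_right (0::real). 0 < s \<and> s < 1"
  unfolding eventually_at_right[OF zero_less_one] by (rule exI[of _ 1]) auto

lemma tendsto_ray_at_right:
  fixes x v :: "'a::real_normed_vector"
  shows "((\<lambda>s. x + s *\<^sub>R v) \<longlongrightarrow> x) (at_right 0)"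
proof -
  have "((\<lambda>s. x + s *\<^sub>R v) \<longlongrightarrow> x + 0 *\<^sub>R v) (at_right 0)"
    by (intro tendsto_intros)
  thus ?thesis by simp
qed

lemma quasiconvex_onD:
  assumes "quasiconvex_on \<Gamma> f" "x \<in> \<Gamma>" "y \<in> \<Gamma>" "0 \<le> t" "t \<le> 1"
  shows "f (x + t *\<^sub>R (y - x)) \<le> max (f x) (f y)"
  using assms unfolding quasiconvex_on_def by auto

lemma convex_segment_point:
  assumes "convex S" "x \<in> S" "y \<in> S" "0 \<le> t" "t \<le> 1"
  shows "x + t *\<^sub>R (y - x) \<in> S"
proof -
  have "x + t *\<^sub>R (y - x) = (1 - t) *\<^sub>R x + t *\<^sub>R y" by (simp add: algebra_simps)
  thus ?thesis using convexD_alt[OF assms] by simp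
qed

lemma quasiconvex_on_gradient_nonpos:
  fixes f :: "'a::real_inner \<Rightarrow> real"
  assumes qc: "quasiconvex_on \<Gamma> f" and x: "x \<in> \<Gamma>" and z: "z \<in> \<Gamma>" and le: "f z \<le> f x"
    and d: "(f has_derivative (\<lambda>h. g \<bullet> h)) (at x)"
  shows "g \<bullet> (z - x) \<le> 0"
proof (rule tendsto_upperbound[OF has_derivative_directional_quotient[OF d]])
  show "\<forall>\<^sub>F s in at_right 0. (f (x + s *\<^sub>R (z - x)) - f x) / s \<le> 0"
    using eventually_in_unit_interval_at_right
  proof (rule eventually_mono)
    fix s :: real assume s: "0 < s \<and> s < 1"
    with quasiconvex_onD[OF qc x z] le have "f (x + s *\<^sub>R (z - x)) \<le> f x" by force
    with s show "(f (x + s *\<^sub>R (z - x)) - f x) / s \<le> 0" by (simp add: divide_nonpos_pos)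
  qed
qed simp

lemma argmin_on_gradient_nonneg:
  fixes f :: "'a::real_inner \<Rightarrow> real"
  assumes "convex S" and x: "x \<in> argmin_on S f" and z: "z \<in> S"
    and d: "(f has_derivative (\<lambda>h. g \<bullet> h)) (at x)"
  shows "g \<bullet> (z - x) \<ge> 0"
proof (rule tendsto_lowerbound[OF has_derivative_directional_quotient[OF d]])
  show "\<forall>\<^sub>F s in at_right 0. 0 \<le> (f (x + s *\<^sub>R (z - x)) - f x) / s"
    using eventually_in_unit_interval_at_right
  proof (rule eventually_mono)
    fix s :: real assume s: "0 < s \<and> s < 1"
    have "x + s *\<^sub>R (z - x) \<in> S"
      using convex_segment_point[OF \<open>convex S\<close> _ z] x s unfolding argmin_on_def by auto
    with x s show "0 \<le> (f (x + s *\<^sub>R (z - x)) - f x) / s" unfolding argmin_on_def by auto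
  qed
qed simp

lemma quasiconvex_on_pseudoconvex:
  fixes f :: "'a::real_inner \<Rightarrow> real"
  assumes qc: "quasiconvex_on \<Gamma> f" and "open \<Gamma>" and x: "x \<in> \<Gamma>" and y: "y \<in> \<Gamma>"
    and dx: "(f has_derivative (\<lambda>h. g \<bullet> h)) (at x)"
    and dy: "(f has_derivative (\<lambda>h. g' \<bullet> h)) (at y)"
    and "g \<noteq> 0" and ge: "g \<bullet> (y - x) \<ge> 0"
  shows "f x \<le> f y"
proof (rule ccontr)
  assume "\<not> f x \<le> f y"
  have "((\<lambda>s. f (y + s *\<^sub>R g)) \<longlongrightarrow> f y) (at_right 0)"
    using isCont_tendsto_compose[OF has_derivative_continuous[OF dy] tendsto_ray_at_right] .
  hence "\<forall>\<^sub>F s in at_right 0. f (y + s *\<^sub>R g) < f x"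
    using \<open>\<not> f x \<le> f y\<close> by (simp add: order_tendstoD(2))
  moreover have "\<forall>\<^sub>F s in at_right 0. y + s *\<^sub>R g \<in> \<Gamma>"
    by (rule topological_tendstoD[OF tendsto_ray_at_right \<open>open \<Gamma>\<close> y])
  ultimately have "\<forall>\<^sub>F s in at_right (0::real). 0 < s \<and> f (y + s *\<^sub>R g) < f x \<and> y + s *\<^sub>R g \<in> \<Gamma>"
    using eventually_in_unit_interval_at_right by eventually_elim auto
  then obtain s where s: "0 < s" "f (y + s *\<^sub>R g) < f x" "y + s *\<^sub>R g \<in> \<Gamma>"
    using eventually_happens'[of "at_right (0::real)"] by auto
  have "g \<bullet> (y + s *\<^sub>R g - x) \<le> 0"
    using quasiconvex_on_gradient_nonpos[OF qc x s(3) _ dx] s(2) by simp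
  moreover have "g \<bullet> (y + s *\<^sub>R g - x) = g \<bullet> (y - x) + s * (g \<bullet> g)"
    by (simp add: algebra_simps inner_diff_right inner_add_right)
  moreover have "0 < s * (g \<bullet> g)" using s(1) \<open>g \<noteq> 0\<close> by simp
  ultimately show False using ge by linarith
qed

lemma convex_argmin_on:
  assumes "quasiconvex_on \<Gamma> f" "S \<subseteq> \<Gamma>" "convex S"
  shows "convex (argmin_on S f)"
proof (rule convexI)
  fix x y and u v :: real
  assume x: "x \<in> argmin_on S f" and y: "y \<in> argmin_on S f" and uv: "0 \<le> u" "0 \<le> v" "u + v = 1"
  have xy: "x \<in> S" "y \<in> S" "f x = f y" using x y unfolding argmin_on_def by (auto intro: order_antisym)
  have "u *\<^sub>R x + v *\<^sub>R y = x + v *\<^sub>R (y - x)"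
    using uv by (simp add: algebra_simps flip: scaleR_add_left)
  moreover have "f (x + v *\<^sub>R (y - x)) \<le> f x"
    using quasiconvex_onD[OF assms(1), of x y v] xy assms(2) uv by auto
  moreover have "x + v *\<^sub>R (y - x) \<in> S"
    using convex_segment_point[OF assms(3) xy(1,2), of v] uv by simp
  ultimately show "u *\<^sub>R x + v *\<^sub>R y \<in> argmin_on S f"
    using x unfolding argmin_on_def by force
qed

lemma quasiconvex_on_level_directional_derivative_le_max:
  fixes f :: "'a::real_inner \<Rightarrow> real"
  assumes qc: "quasiconvex_on \<Gamma> f" and "open \<Gamma>" and p: "p \<in> \<Gamma>" and q: "q \<in> \<Gamma>"
    and t: "0 \<le> t" "t \<le> 1"
    and level: "f p = f (p + t *\<^sub>R (q - p))" "f q = f (p + t *\<^sub>R (q - p))"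
    and dp: "(f has_derivative (\<lambda>h. gp \<bullet> h)) (at p)"
    and dq: "(f has_derivative (\<lambda>h. gq \<bullet> h)) (at q)"
    and dr: "(f has_derivative (\<lambda>h. gr \<bullet> h)) (at (p + t *\<^sub>R (q - p)))"
  shows "gr \<bullet> (u + t *\<^sub>R (v - u)) \<le> max (gp \<bullet> u) (gq \<bullet> v)"
proof -
  define r where "r = p + t *\<^sub>R (q - p)"
  define P where "P s = p + s *\<^sub>R u" for s :: real
  define Q where "Q s = q + s *\<^sub>R v" for s :: real
  have PQ: "r + s *\<^sub>R (u + t *\<^sub>R (v - u)) = P s + t *\<^sub>R (Q s - P s)" for s
    unfolding r_def P_def Q_def by (simp add: algebra_simps)
  have "\<forall>\<^sub>F s in at_right 0. P s \<in> \<Gamma>"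
    unfolding P_def by (rule topological_tendstoD[OF tendsto_ray_at_right \<open>open \<Gamma>\<close> p])
  moreover have "\<forall>\<^sub>F s in at_right 0. Q s \<in> \<Gamma>"
    unfolding Q_def by (rule topological_tendstoD[OF tendsto_ray_at_right \<open>open \<Gamma>\<close> q])
  ultimately have "\<forall>\<^sub>F s in at_right 0. (f (r + s *\<^sub>R (u + t *\<^sub>R (v - u))) - f r) / s
      \<le> max ((f (P s) - f p) / s) ((f (Q s) - f q) / s)"
    using eventually_in_unit_interval_at_right
  proof eventually_elim
    case (elim s)
    have "f (r + s *\<^sub>R (u + t *\<^sub>R (v - u))) - f r \<le> max (f (P s) - f r) (f (Q s) - f r)"
      unfolding PQ using quasiconvex_onD[OF qc _ _ t] elim by fastforce
    hence "(f (r + s *\<^sub>R (u + t *\<^sub>R (v - u))) - f r) / s \<le> max (f (P s) - f r) (f (Q s) - f r) / s"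
      using elim by (simp add: divide_right_mono)
    also have "\<dots> = max ((f (P s) - f r) / s) ((f (Q s) - f r) / s)"
      using elim by (auto simp: max_def divide_le_cancel)
    finally show ?case using level unfolding r_def by simp
  qed
  moreover have "((\<lambda>s. max ((f (P s) - f p) / s) ((f (Q s) - f q) / s)) \<longlongrightarrow> max (gp \<bullet> u) (gq \<bullet> v)) (at_right 0)"
    unfolding P_def Q_def
    by (intro tendsto_max has_derivative_directional_quotient dp dq)
  moreover note has_derivative_directional_quotient[OF dr[folded r_def]]
  ultimately show ?thesis by (intro tendsto_le[of "at_right 0"]) simp_all
qed

lemma gradient_nonzero_on_level_segment:
  fixes f :: "'a::real_inner \<Rightarrow> real" and gradf :: "'a \<Rightarrow> 'a"
  assumes qc: "quasiconvex_on \<Gamma> f" and "open \<Gamma>"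
    and seg: "closed_segment a b \<subseteq> \<Gamma>" and level: "\<And>y. y \<in> closed_segment a b \<Longrightarrow> f y = f a"
    and grad: "\<And>x. x \<in> \<Gamma> \<Longrightarrow> (f has_derivative (\<lambda>h. gradf x \<bullet> h)) (at x)"
    and cont: "continuous_on \<Gamma> gradf" and nz: "gradf a \<noteq> 0"
  shows "gradf b \<noteq> 0"
proof
  assume b0: "gradf b = 0"
  define d where "d = gradf a"
  have dpos: "0 < d \<bullet> d" using nz unfolding d_def by simp
  have a: "a \<in> \<Gamma>" and b: "b \<in> \<Gamma>" using seg by auto
  have "isCont gradf a" using cont \<open>open \<Gamma>\<close> a continuous_on_eq_continuous_at by blast
  from isCont_tendsto_compose[OF this tendsto_ray_at_right]
  have "((\<lambda>l. gradf (a + l *\<^sub>R (b - a)) \<bullet> d) \<longlongrightarrow> d \<bullet> d) (at_right 0)"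
    unfolding d_def by (intro tendsto_intros)
  hence "\<forall>\<^sub>F l in at_right 0. (d \<bullet> d) / 2 < gradf (a + l *\<^sub>R (b - a)) \<bullet> d"
    using dpos by (intro order_tendstoD(1)) auto
  then obtain l where l: "0 < l" "l < 1" and near: "(d \<bullet> d) / 2 < gradf (a + l *\<^sub>R (b - a)) \<bullet> d"
    using eventually_happens'[of "at_right (0::real)"] eventually_in_unit_interval_at_right
    by (metis (mono_tags, lifting) eventually_conj trivial_limit_at_right_real)
  define r where "r = a + l *\<^sub>R (b - a)"
  have r_alt: "r = b + (1 - l) *\<^sub>R (a - b)" unfolding r_def by (simp add: algebra_simps)
  have r_seg: "r \<in> closed_segment a b"
    unfolding r_def in_segment using l by (intro exI[of _ l]) (simp add: algebra_simps)
  have near_r: "(d \<bullet> d) / 2 < gradf r \<bullet> d" using near unfolding r_def .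
  text \<open>Derivative directions \<open>(2/l) d\<close> at \<open>b\<close> and \<open>d\<close> at \<open>a\<close>; their combination at \<open>r\<close> is \<open>(3 - l) d\<close>.\<close>
  have "gradf r \<bullet> ((2 / l) *\<^sub>R d + (1 - l) *\<^sub>R (d - (2 / l) *\<^sub>R d)) \<le> max (gradf b \<bullet> ((2 / l) *\<^sub>R d)) (gradf a \<bullet> d)"
  proof (rule quasiconvex_on_level_directional_derivative_le_max[where t = "1 - l",
        OF qc \<open>open \<Gamma>\<close> b a, folded r_alt, OF _ _ _ _ grad[OF b] grad[OF a] grad])
    show "f b = f r" "f a = f r" using level[OF r_seg] level[of b] by simp_all
    show "r \<in> \<Gamma>" using r_seg seg by blast
  qed (use l in simp_all)
  also have "\<dots> = d \<bullet> d" using b0 dpos unfolding d_def by simp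
  also have "(2 / l) *\<^sub>R d + (1 - l) *\<^sub>R (d - (2 / l) *\<^sub>R d) = (2 / l + (1 - l) * (1 - 2 / l)) *\<^sub>R d"
    by (simp add: algebra_simps)
  also have "2 / l + (1 - l) * (1 - 2 / l) = 3 - l"
    using l by (simp add: field_simps)
  finally have "(3 - l) * (gradf r \<bullet> d) \<le> d \<bullet> d" by simp
  moreover have "2 * (gradf r \<bullet> d) < (3 - l) * (gradf r \<bullet> d)"
    using l near_r dpos by (intro mult_strict_right_mono) linarith+
  ultimately show False using near_r by linarith
qed

lemma argmin_on_level:
  assumes "x \<in> argmin_on S f" "y \<in> argmin_on S f"
  shows "f x = f y"
  using assms unfolding argmin_on_def by (auto intro: order_antisym)

lemma argmin_on_gradient_orthogonal:
  fixes f :: "'a::real_inner \<Rightarrow> real"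
  assumes qc: "quasiconvex_on \<Gamma> f" and "S \<subseteq> \<Gamma>" "convex S"
    and x: "x \<in> argmin_on S f" and y: "y \<in> argmin_on S f"
    and d: "(f has_derivative (\<lambda>h. g \<bullet> h)) (at x)"
  shows "g \<bullet> (y - x) = 0"
proof -
  have "x \<in> \<Gamma>" "y \<in> S" "y \<in> \<Gamma>" using x y \<open>S \<subseteq> \<Gamma>\<close> unfolding argmin_on_def by auto
  with argmin_on_level[OF x y] show ?thesis
    using quasiconvex_on_gradient_nonpos[OF qc _ _ _ d] argmin_on_gradient_nonneg[OF \<open>convex S\<close> x _ d]
    by (metis order.antisym order.refl)
qed

lemma argmin_on_gradient_nonzero:
  fixes f :: "'a::real_inner \<Rightarrow> real" and gradf :: "'a \<Rightarrow> 'a"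
  assumes qc: "quasiconvex_on \<Gamma> f" and "open \<Gamma>" "S \<subseteq> \<Gamma>" "convex S"
    and grad: "\<And>x. x \<in> \<Gamma> \<Longrightarrow> (f has_derivative (\<lambda>h. gradf x \<bullet> h)) (at x)"
    and "continuous_on \<Gamma> gradf"
    and x: "x \<in> argmin_on S f" and y: "y \<in> argmin_on S f" and "gradf y \<noteq> 0"
  shows "gradf x \<noteq> 0"
proof (rule gradient_nonzero_on_level_segment[OF qc \<open>open \<Gamma>\<close> _ _ grad \<open>continuous_on \<Gamma> gradf\<close> \<open>gradf y \<noteq> 0\<close>])
  have "closed_segment y x \<subseteq> argmin_on S f"
    using convex_argmin_on[OF qc \<open>S \<subseteq> \<Gamma>\<close> \<open>convex S\<close>] x y by (simp add: closed_segment_subset)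
  moreover have "argmin_on S f \<subseteq> \<Gamma>" using \<open>S \<subseteq> \<Gamma>\<close> unfolding argmin_on_def by blast
  ultimately show "closed_segment y x \<subseteq> \<Gamma>" "\<And>z. z \<in> closed_segment y x \<Longrightarrow> f z = f y"
    using argmin_on_level[OF _ y] by blast+
qed

theorem theorem3:
  fixes \<Gamma> S :: "(real ^ 'n) set"
    and f :: "real ^ 'n \<Rightarrow> real"
    and gradf :: "real ^ 'n \<Rightarrow> real ^ 'n"
    and xbar :: "real ^ 'n"
  assumes "open \<Gamma>" and "convex \<Gamma>"
    and "S \<subseteq> \<Gamma>" and "S \<noteq> {}" and "convex S"
    and grad: "\<And>x. x \<in> \<Gamma> \<Longrightarrow> (f has_derivative (\<lambda>h. gradf x \<bullet> h)) (at x)"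
    and "continuous_on \<Gamma> gradf"
    and "quasiconvex_on \<Gamma> f"
    and "xbar \<in> argmin_on S f"
    and "gradf xbar \<noteq> 0"
  defines "S1 \<equiv> {x \<in> S. gradf x \<bullet> (xbar - x) = 0 \<and> gradf x \<noteq> 0}"
    and "S2 \<equiv> {x \<in> S. gradf x \<bullet> (xbar - x) \<ge> 0 \<and> gradf x \<noteq> 0}"
    and "S3 \<equiv> {x \<in> S. gradf x \<bullet> (xbar - x) = gradf xbar \<bullet> (x - xbar) \<and> gradf x \<noteq> 0}"
    and "S4 \<equiv> {x \<in> S. gradf x \<bullet> (xbar - x) \<ge> gradf xbar \<bullet> (x - xbar) \<and> gradf x \<noteq> 0}"
    and "S5 \<equiv> {x \<in> S. gradf x \<bullet> (xbar - x) = 0 \<and> gradf xbar \<bullet> (x - xbar) = 0 \<and> gradf x \<noteq> 0}"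
  shows "argmin_on S f = S1 \<and> S1 = S2 \<and> S2 = S3 \<and> S3 = S4 \<and> S4 = S5"
proof -
  note qc = \<open>quasiconvex_on \<Gamma> f\<close> and xbar = \<open>xbar \<in> argmin_on S f\<close>
  have xbar_G: "xbar \<in> \<Gamma>" using xbar \<open>S \<subseteq> \<Gamma>\<close> unfolding argmin_on_def by auto
  have "argmin_on S f \<subseteq> S5"
  proof
    fix x assume x: "x \<in> argmin_on S f"
    hence "x \<in> S" and x_G: "x \<in> \<Gamma>" using \<open>S \<subseteq> \<Gamma>\<close> unfolding argmin_on_def by auto
    with x show "x \<in> S5" unfolding S5_def
      using argmin_on_gradient_orthogonal[OF qc \<open>S \<subseteq> \<Gamma>\<close> \<open>convex S\<close>] grad[OF x_G] grad[OF xbar_G] xbar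
        argmin_on_gradient_nonzero[OF qc \<open>open \<Gamma>\<close> \<open>S \<subseteq> \<Gamma>\<close> \<open>convex S\<close> grad
          \<open>continuous_on \<Gamma> gradf\<close> x xbar \<open>gradf xbar \<noteq> 0\<close>]
      by blast
  qed
  moreover have "S2 \<subseteq> argmin_on S f"
  proof
    fix x assume x: "x \<in> S2"
    hence "x \<in> \<Gamma>" using \<open>S \<subseteq> \<Gamma>\<close> unfolding S2_def by auto
    with x have "f x \<le> f xbar" unfolding S2_def
      by (intro quasiconvex_on_pseudoconvex[OF qc \<open>open \<Gamma>\<close> _ xbar_G grad grad[OF xbar_G]]) auto
    thus "x \<in> argmin_on S f" using x xbar unfolding S2_def argmin_on_def by force
  qed
  moreover have "S4 \<subseteq> S2"
    using argmin_on_gradient_nonneg[OF \<open>convex S\<close> xbar _ grad[OF xbar_G]]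
    unfolding S4_def S2_def by (auto intro: order_trans)
  moreover have "S5 \<subseteq> S1" "S5 \<subseteq> S3" "S1 \<subseteq> S2" "S3 \<subseteq> S4"
    unfolding S1_def S2_def S3_def S4_def S5_def by auto
  ultimately show ?thesis by blast
qed

end
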